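(* Let $k\ge 1$. If a bar $k$-visibility graph is triangle-free, then it is a disjoint union of caterpillars.
   Context: A bar $k$-visibility representation is a finite collection of pairwise disjoint closed horizontal line segments (bars) in the plane; two bars are joined by a line of sight if there is a vertical segment with endpoints on the two bars intersecting at most $k$ other bars. The bar $k$-visibility graph has one vertex per bar, two vertices adjacent iff their bars are joined by a line of sight. A caterpillar is a tree in which all vertices are within distance one of a central path. *)

theory Defs
  imports Main "HOL-Library.Disjoint_Sets" Complex_Main
begin

definition bar_rep :: "'a set \<Rightarrow> ('a \<Rightarrow> real) \<Rightarrow> ('a \<Rightarrow> real) \<Rightarrow> ('a \<Rightarrow> real) \<Rightarrow> bool" where
  "bar_rep V lft rgt hgt \<longleftrightarrow> finite V \<and> (\<forall>i\<in>V. lft i < rgt i) \<and>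
     (\<forall>i\<in>V. \<forall>j\<in>V. i \<noteq> j \<longrightarrow>
        ({lft i..rgt i} \<times> {hgt i}) \<inter> ({lft j..rgt j} \<times> {hgt j}) = {})"

definition vseg :: "real \<Rightarrow> real \<Rightarrow> real \<Rightarrow> (real \<times> real) set" where
  "vseg x a b = {x} \<times> {min a b..max a b}"

definition bar_k_visible ::
  "nat \<Rightarrow> 'a set \<Rightarrow> ('a \<Rightarrow> real) \<Rightarrow> ('a \<Rightarrow> real) \<Rightarrow> ('a \<Rightarrow> real) \<Rightarrow> 'a \<Rightarrow> 'a \<Rightarrow> bool" where
  "bar_k_visible k V lft rgt hgt i j \<longleftrightarrow> i \<in> V \<and> j \<in> V \<and> i \<noteq> j \<and>
     (\<exists>x. x \<in> {lft i..rgt i} \<and> x \<in> {lft j..rgt j} \<and>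
        card {m \<in> V - {i, j}.
                vseg x (hgt i) (hgt j) \<inter> ({lft m..rgt m} \<times> {hgt m}) \<noteq> {}} \<le> k)"

definition triangle_free :: "'a set \<Rightarrow> ('a \<Rightarrow> 'a \<Rightarrow> bool) \<Rightarrow> bool" where
  "triangle_free V E \<longleftrightarrow>
     \<not> (\<exists>u\<in>V. \<exists>v\<in>V. \<exists>w\<in>V. E u v \<and> E v w \<and> E u w)"

definition is_path :: "'a set \<Rightarrow> ('a \<Rightarrow> 'a \<Rightarrow> bool) \<Rightarrow> 'a list \<Rightarrow> bool" where
  "is_path V E ps \<longleftrightarrow> ps \<noteq> [] \<and> set ps \<subseteq> V \<and> distinct ps \<and>
     (\<forall>i. Suc i < length ps \<longrightarrow> E (ps ! i) (ps ! Suc i))"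

definition is_cycle :: "'a set \<Rightarrow> ('a \<Rightarrow> 'a \<Rightarrow> bool) \<Rightarrow> 'a list \<Rightarrow> bool" where
  "is_cycle V E cs \<longleftrightarrow> length cs \<ge> 3 \<and> is_path V E cs \<and> E (last cs) (hd cs)"

definition connected_in :: "'a set \<Rightarrow> ('a \<Rightarrow> 'a \<Rightarrow> bool) \<Rightarrow> 'a \<Rightarrow> 'a \<Rightarrow> bool" where
  "connected_in V E u v \<longleftrightarrow> (\<lambda>a b. a \<in> V \<and> b \<in> V \<and> E a b)\<^sup>*\<^sup>* u v"

definition components :: "'a set \<Rightarrow> ('a \<Rightarrow> 'a \<Rightarrow> bool) \<Rightarrow> 'a set set" where
  "components V E = (\<lambda>v. {u \<in> V. connected_in V E v u}) ` V"

definition is_tree :: "'a set \<Rightarrow> ('a \<Rightarrow> 'a \<Rightarrow> bool) \<Rightarrow> bool" where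
  "is_tree C E \<longleftrightarrow> C \<noteq> {} \<and> (\<forall>u\<in>C. \<forall>v\<in>C. connected_in C E u v) \<and>
     \<not> (\<exists>cs. is_cycle C E cs)"

definition is_caterpillar :: "'a set \<Rightarrow> ('a \<Rightarrow> 'a \<Rightarrow> bool) \<Rightarrow> bool" where
  "is_caterpillar C E \<longleftrightarrow> is_tree C E \<and>
     (\<exists>ps. is_path C E ps \<and> (\<forall>v\<in>C. v \<in> set ps \<or> (\<exists>u\<in>set ps. E u v)))"

definition disjoint_union_of_caterpillars :: "'a set \<Rightarrow> ('a \<Rightarrow> 'a \<Rightarrow> bool) \<Rightarrow> bool" where
  "disjoint_union_of_caterpillars V E \<longleftrightarrow> (\<forall>C\<in>components V E. is_caterpillar C E)"

end

theory Submission
  imports Defs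
begin

text \<open>If three bars meet a common vertical line, the three lowest of them see each other
pairwise through at most one bar, so for \<open>k \<ge> 1\<close> they form a triangle. Hence in a
triangle-free bar \<open>k\<close>-visibility graph every vertical line meets at most two bars; then no
line of sight is ever blocked, and the graph is the overlap graph of the projections of the
bars to the x-axis. Such an interval graph is acyclic: on a cycle, the interval whose right
end is leftmost has two cycle neighbours, both containing that right end. In a component,
a path from the interval with least left end to the one with largest right end passes over
every left end, so every vertex lies on it or next to it.\<close>

lemma finite_ex_minimizer:
  fixes f :: "'a \<Rightarrow> 'b :: linorder"
  assumes "finite S" "S \<noteq> {}"
  obtains m where "m \<in> S" "\<And>t. t \<in> S \<Longrightarrow> f m \<le> f t"
  using arg_min_if_finite(1)[OF assms] arg_min_least[OF assms] by blast

lemma finite_inj_ex_strict_min: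
  fixes f :: "'a \<Rightarrow> 'b :: linorder"
  assumes "finite S" "S \<noteq> {}" "inj_on f S"
  obtains m where "m \<in> S" "\<And>t. t \<in> S \<Longrightarrow> t \<noteq> m \<Longrightarrow> f m < f t"
proof -
  obtain m where m: "m \<in> S" "\<And>t. t \<in> S \<Longrightarrow> f m \<le> f t"
    using finite_ex_minimizer[OF assms(1,2)] by blast
  have "f m < f t" if "t \<in> S" "t \<noteq> m" for t
    using m inj_onD[OF assms(3)] that by (metis order.order_iff_strict)
  with m show thesis using that by blast
qed

lemma finite_inj_three_lowest:
  fixes f :: "'a \<Rightarrow> 'b :: linorder"
  assumes fin: "finite S" and inj: "inj_on f S" and abc: "{a, b, c} \<subseteq> S" "distinct [a, b, c]"
  obtains a' b' c' where "{a', b', c'} \<subseteq> S" "f a' < f b'" "f b' < f c'"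
    "\<And>m. m \<in> S \<Longrightarrow> f m \<le> f c' \<Longrightarrow> m \<in> {a', b', c'}"
proof -
  obtain a' where a': "a' \<in> S" "\<And>t. t \<in> S \<Longrightarrow> t \<noteq> a' \<Longrightarrow> f a' < f t"
    using finite_inj_ex_strict_min[OF fin _ inj] abc by blast
  obtain b' where b': "b' \<in> S - {a'}" "\<And>t. t \<in> S - {a'} \<Longrightarrow> t \<noteq> b' \<Longrightarrow> f b' < f t"
    using finite_inj_ex_strict_min[of "S - {a'}" f] fin inj abc by (auto simp: inj_on_diff)
  obtain c' where c': "c' \<in> S - {a', b'}"
      "\<And>t. t \<in> S - {a', b'} \<Longrightarrow> t \<noteq> c' \<Longrightarrow> f c' < f t"
  proof (rule finite_inj_ex_strict_min[of "S - {a', b'}" f])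
    show "S - {a', b'} \<noteq> {}" using abc by auto
  qed (use fin inj in \<open>auto simp: inj_on_diff\<close>)
  show thesis
  proof (rule that)
    show "{a', b', c'} \<subseteq> S" using a' b' c' by auto
    show "f a' < f b'" using a'(2)[of b'] b' by auto
    show "f b' < f c'" using b'(2)[of c'] c' by auto
    show "m \<in> {a', b', c'}" if "m \<in> S" "f m \<le> f c'" for m
      using c'(2)[of m] that by fastforce
  qed
qed

lemma vseg_meets_bar_iff:
  "vseg x a b \<inter> ({l..r} \<times> {h}) \<noteq> {} \<longleftrightarrow> l \<le> x \<and> x \<le> r \<and> min a b \<le> h \<and> h \<le> max a b"
proof
  assume "l \<le> x \<and> x \<le> r \<and> min a b \<le> h \<and> h \<le> max a b"
  then have "(x, h) \<in> vseg x a b \<inter> ({l..r} \<times> {h})" by (auto simp: vseg_def)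
  then show "vseg x a b \<inter> ({l..r} \<times> {h}) \<noteq> {}" by blast
qed (auto simp: vseg_def)

lemma bar_rep_stabbed_heights_inj:
  assumes "bar_rep V lft rgt hgt"
  shows "inj_on hgt {m \<in> V. lft m \<le> x \<and> x \<le> rgt m}"
proof (rule inj_onI, rule ccontr)
  fix m m' assume m: "m \<in> {m \<in> V. lft m \<le> x \<and> x \<le> rgt m}"
    and m': "m' \<in> {m \<in> V. lft m \<le> x \<and> x \<le> rgt m}" and "hgt m = hgt m'" "m \<noteq> m'"
  then have "(x, hgt m) \<in> ({lft m..rgt m} \<times> {hgt m}) \<inter> ({lft m'..rgt m'} \<times> {hgt m'})"
    by auto
  then show False using assms m m' \<open>m \<noteq> m'\<close> unfolding bar_rep_def by blast
qed

definition no_triple_overlap :: "'a set \<Rightarrow> ('a \<Rightarrow> real) \<Rightarrow> ('a \<Rightarrow> real) \<Rightarrow> bool" where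
  "no_triple_overlap V l r \<longleftrightarrow> (\<forall>x. \<forall>a\<in>V. \<forall>b\<in>V. \<forall>c\<in>V. distinct [a, b, c] \<longrightarrow>
     \<not> (l a \<le> x \<and> x \<le> r a \<and> l b \<le> x \<and> x \<le> r b \<and> l c \<le> x \<and> x \<le> r c))"

lemma triangle_free_bar_visibility_imp_no_triple_overlap:
  assumes k: "k \<ge> 1" and br: "bar_rep V lft rgt hgt"
    and tf: "triangle_free V (bar_k_visible k V lft rgt hgt)"
  shows "no_triple_overlap V lft rgt"
  unfolding no_triple_overlap_def
proof (intro allI ballI impI notI)
  fix x a b c assume "a \<in> V" "b \<in> V" "c \<in> V" "distinct [a, b, c]"
    and "lft a \<le> x \<and> x \<le> rgt a \<and> lft b \<le> x \<and> x \<le> rgt b \<and> lft c \<le> x \<and> x \<le> rgt c"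
  moreover define S where "S = {m \<in> V. lft m \<le> x \<and> x \<le> rgt m}"
  moreover have "finite S" using br unfolding bar_rep_def S_def by auto
  ultimately obtain a' b' c' where abc: "{a', b', c'} \<subseteq> S"
      and heights: "hgt a' < hgt b'" "hgt b' < hgt c'"
      and lowest: "\<And>m. m \<in> S \<Longrightarrow> hgt m \<le> hgt c' \<Longrightarrow> m \<in> {a', b', c'}"
    using finite_inj_three_lowest[of S hgt a b c] bar_rep_stabbed_heights_inj[OF br]
    by blast
  have below: "max (hgt i) (hgt j) \<le> hgt c'" if "i \<in> {a', b', c'}" "j \<in> {a', b', c'}" for i j
    using that heights by auto
  have visible: "bar_k_visible k V lft rgt hgt i j"
    if ij: "i \<in> {a', b', c'}" "j \<in> {a', b', c'}" "i \<noteq> j" for i j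
  proof -
    \<comment> \<open>only the third of the three lowest bars can lie between two of them\<close>
    let ?B = "{m \<in> V - {i, j}. vseg x (hgt i) (hgt j) \<inter> ({lft m..rgt m} \<times> {hgt m}) \<noteq> {}}"
    have "?B \<subseteq> {a', b', c'} - {i, j}"
    proof
      fix m assume "m \<in> ?B"
      then have "m \<in> S - {i, j}" "hgt m \<le> max (hgt i) (hgt j)"
        by (auto simp: vseg_meets_bar_iff S_def)
      then have "hgt m \<le> hgt c'" using below[OF ij(1,2)] by linarith
      then show "m \<in> {a', b', c'} - {i, j}" using lowest \<open>m \<in> S - {i, j}\<close> by auto
    qed
    moreover have "card ({a', b', c'} - {i, j}) \<le> Suc 0"
      using ij by (auto simp: card_insert_if)
    ultimately have "card ?B \<le> k"
      using k card_mono[of "{a', b', c'} - {i, j}" ?B] by fastforce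
    then show ?thesis using ij abc unfolding bar_k_visible_def S_def by auto
  qed
  have "a' \<in> V" "b' \<in> V" "c' \<in> V" using abc unfolding S_def by auto
  moreover have "a' \<noteq> b'" "b' \<noteq> c'" "a' \<noteq> c'" using heights by auto
  ultimately show False
    using tf visible[of a' b'] visible[of b' c'] visible[of a' c']
    unfolding triangle_free_def by blast
qed

definition overlap_graph :: "'a set \<Rightarrow> ('a \<Rightarrow> real) \<Rightarrow> ('a \<Rightarrow> real) \<Rightarrow> 'a \<Rightarrow> 'a \<Rightarrow> bool" where
  "overlap_graph V l r i j \<longleftrightarrow> i \<in> V \<and> j \<in> V \<and> i \<noteq> j \<and> l i \<le> r j \<and> l j \<le> r i"

lemma bar_k_visible_eq_overlap_graph:
  assumes br: "bar_rep V lft rgt hgt" and ply: "no_triple_overlap V lft rgt"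
  shows "bar_k_visible k V lft rgt hgt = overlap_graph V lft rgt"
proof (intro ext iffI)
  fix i j assume "bar_k_visible k V lft rgt hgt i j"
  then show "overlap_graph V lft rgt i j"
    unfolding bar_k_visible_def overlap_graph_def by auto
next
  fix i j assume ij: "overlap_graph V lft rgt i j"
  define x where "x = max (lft i) (lft j)"
  have x: "lft i \<le> x" "x \<le> rgt i" "lft j \<le> x" "x \<le> rgt j"
    using ij br unfolding x_def overlap_graph_def bar_rep_def by auto
  let ?B = "{m \<in> V - {i, j}. vseg x (hgt i) (hgt j) \<inter> ({lft m..rgt m} \<times> {hgt m}) \<noteq> {}}"
  have "?B = {}"
    using ply ij x unfolding no_triple_overlap_def overlap_graph_def
    by (auto simp: vseg_meets_bar_iff)
  then have "card ?B \<le> k" by (metis card.empty le0)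
  then show "bar_k_visible k V lft rgt hgt i j"
    using ij x unfolding bar_k_visible_def overlap_graph_def by auto
qed

lemma rtranclp_imp_distinct_path:
  assumes "R\<^sup>*\<^sup>* u w"
  obtains ps where "ps \<noteq> []" "hd ps = u" "last ps = w" "distinct ps" "successively R ps"
    "set ps \<subseteq> insert u {b. \<exists>a. R a b}"
proof -
  from assms have "\<exists>ps. ps \<noteq> [] \<and> hd ps = u \<and> last ps = w \<and> distinct ps \<and> successively R ps
      \<and> set ps \<subseteq> insert u {b. \<exists>a. R a b}"
  proof (induction rule: rtranclp_induct)
    case base
    show ?case by (intro exI[of _ "[u]"]) auto
  next
    case (step y z)
    then obtain ps where ps: "ps \<noteq> []" "hd ps = u" "last ps = y" "distinct ps"
        "successively R ps" "set ps \<subseteq> insert u {b. \<exists>a. R a b}" by blast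
    show ?case
    proof (cases "z \<in> set ps")
      case True
      then obtain xs ys where ps_eq: "ps = xs @ z # ys" by (meson in_set_conv_decomp)
      have "hd (xs @ [z]) = u" using ps(2) ps_eq by (cases xs) auto
      moreover have "successively R (xs @ [z])" using ps(5) unfolding ps_eq
        by (auto simp: successively_append_iff successively_Cons)
      ultimately show ?thesis using ps ps_eq by (intro exI[of _ "xs @ [z]"]) auto
    next
      case False
      then show ?thesis using ps step.hyps(2)
        by (intro exI[of _ "ps @ [z]"]) (auto simp: successively_append_iff)
    qed
  qed
  then show thesis using that by blast
qed

lemma is_cycle_two_neighbours:
  assumes cyc: "is_cycle C E cs" and v: "v \<in> set cs"
  obtains u w where "u \<in> set cs" "w \<in> set cs" "distinct [u, v, w]" "E u v" "E v w"
proof -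
  define n where "n = length cs"
  have n3: "n \<ge> 3" and dis: "distinct cs"
    and step: "\<And>i. Suc i < n \<Longrightarrow> E (cs ! i) (cs ! Suc i)" and close: "E (last cs) (hd cs)"
    using cyc unfolding is_cycle_def is_path_def n_def by auto
  have wrap: "E (cs ! i) (cs ! (Suc i mod n))" if "i < n" for i
  proof (cases "Suc i < n")
    case False
    then have "Suc i = n" using that by simp
    then have "i = n - 1" "Suc i mod n = 0" by auto
    moreover have "cs \<noteq> []" using n3 n_def by auto
    ultimately show ?thesis using close by (simp add: last_conv_nth hd_conv_nth n_def)
  qed (use step in simp)
  obtain p where p: "p < n" "v = cs ! p" using v by (auto simp: in_set_conv_nth n_def)
  define q where "q = (if p = 0 then n - 1 else p - 1)"
  have q: "q < n" "Suc q mod n = p"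
    using p(1) n3 unfolding q_def by auto
  have "distinct [q, p, Suc p mod n]" using p(1) n3
    by (auto simp: q_def mod_Suc)
  moreover have next_lt: "Suc p mod n < n" using n3 by simp
  ultimately have "distinct [cs ! q, cs ! p, cs ! (Suc p mod n)]"
    using dis p(1) q(1) by (auto simp: nth_eq_iff_index_eq n_def)
  moreover have "E (cs ! q) v" "E v (cs ! (Suc p mod n))" using wrap p q by force+
  moreover have "cs ! q \<in> set cs" "cs ! (Suc p mod n) \<in> set cs"
    using q(1) next_lt by (auto simp: n_def)
  ultimately show thesis using that p(2) by blast
qed

lemma components_connected_in:
  assumes E: "symp E" and C: "C \<in> components V E" and uw: "u \<in> C" "w \<in> C"
  shows "connected_in C E u w"
proof -
  define R where "R = (\<lambda>a b. a \<in> V \<and> b \<in> V \<and> E a b)"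
  obtain v where C_eq: "C = {u \<in> V. R\<^sup>*\<^sup>* v u}"
    using C unfolding components_def connected_in_def R_def by auto
  have restrict: "(\<lambda>a b. a \<in> C \<and> b \<in> C \<and> E a b)\<^sup>*\<^sup>* a b \<and> b \<in> C"
    if "R\<^sup>*\<^sup>* a b" "a \<in> C" for a b
    using that
  proof (induction rule: rtranclp_induct)
    case (step y z)
    then have "R\<^sup>*\<^sup>* v z" using C_eq by (auto intro: rtranclp.rtrancl_into_rtrancl)
    with step show ?case unfolding C_eq R_def by (auto intro: rtranclp.rtrancl_into_rtrancl)
  qed simp
  have "symp R\<^sup>*\<^sup>*" using E by (intro symp_rtranclp) (auto simp: R_def symp_def)
  then have "R\<^sup>*\<^sup>* u v" using uw(1) C_eq by (auto dest: sympD)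
  moreover have "R\<^sup>*\<^sup>* v w" using uw(2) C_eq by auto
  ultimately have "R\<^sup>*\<^sup>* u w" by (rule rtranclp_trans)
  then show ?thesis using restrict[of u w] uw(1) unfolding connected_in_def by blast
qed

lemma overlap_graph_no_cycle:
  assumes ply: "no_triple_overlap V l r" and lr: "\<forall>i\<in>V. l i \<le> r i"
  shows "\<not> is_cycle C (overlap_graph V l r) cs"
proof
  assume cyc: "is_cycle C (overlap_graph V l r) cs"
  then have "set cs \<noteq> {}" unfolding is_cycle_def is_path_def by auto
  then obtain p where p: "p \<in> set cs" "\<And>t. t \<in> set cs \<Longrightarrow> r p \<le> r t"
    using finite_ex_minimizer[of "set cs" r] by blast
  then obtain u w where uw: "u \<in> set cs" "w \<in> set cs" "distinct [u, p, w]"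
      "overlap_graph V l r u p" "overlap_graph V l r p w"
    using is_cycle_two_neighbours[OF cyc] by blast
  \<comment> \<open>both cycle neighbours of \<open>p\<close> reach at least as far right as \<open>p\<close>, so they contain \<open>r p\<close>\<close>
  then have "l u \<le> r p \<and> r p \<le> r u \<and> l p \<le> r p \<and> l w \<le> r p \<and> r p \<le> r w"
    using p(2) lr unfolding overlap_graph_def by auto
  then show False using ply uw unfolding no_triple_overlap_def overlap_graph_def by blast
qed

lemma successively_overlapping_covers:
  fixes l r :: "'a \<Rightarrow> real"
  assumes "ps \<noteq> []" "successively (\<lambda>a b. l a \<le> r b \<and> l b \<le> r a) ps"
    "\<forall>p\<in>set ps. l p \<le> r p" "l (hd ps) \<le> y" "y \<le> r (last ps)"
  shows "\<exists>p\<in>set ps. l p \<le> y \<and> y \<le> r p"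
  using assms
proof (induction ps rule: induct_list012)
  case (3 a b rest)
  show ?case
  proof (cases "y \<le> r a")
    case False
    then have "l b \<le> y" using 3(4) by (auto simp: successively_Cons)
    then show ?thesis using 3 by (auto simp: successively_Cons)
  qed (use 3 in auto)
qed auto

lemma overlap_graph_component_caterpillar:
  assumes fin: "finite V" and ply: "no_triple_overlap V l r" and lr: "\<forall>i\<in>V. l i \<le> r i"
    and C: "C \<in> components V (overlap_graph V l r)"
  shows "is_caterpillar C (overlap_graph V l r)"
proof -
  let ?E = "overlap_graph V l r"
  have CV: "C \<subseteq> V" and "C \<noteq> {}"
    using C unfolding components_def connected_in_def by auto
  moreover have finC: "finite C" using CV fin finite_subset by auto
  ultimately obtain u0 w0 where u0: "u0 \<in> C" "\<And>t. t \<in> C \<Longrightarrow> l u0 \<le> l t"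
      and w0: "w0 \<in> C" "\<And>t. t \<in> C \<Longrightarrow> - r w0 \<le> - r t"
    using finite_ex_minimizer[of C l] finite_ex_minimizer[of C "\<lambda>t. - r t"] by metis
  have "symp ?E" unfolding overlap_graph_def symp_def by auto
  then have conn: "\<forall>u\<in>C. \<forall>w\<in>C. connected_in C ?E u w"
    using components_connected_in[OF _ C] by blast
  then have tree: "is_tree C ?E"
    unfolding is_tree_def using \<open>C \<noteq> {}\<close> overlap_graph_no_cycle[OF ply lr] by blast
  have "(\<lambda>a b. a \<in> C \<and> b \<in> C \<and> ?E a b)\<^sup>*\<^sup>* u0 w0"
    using conn u0(1) w0(1) unfolding connected_in_def by blast
  then obtain ps where ps: "ps \<noteq> []" "hd ps = u0" "last ps = w0" "distinct ps"
      and succ: "successively (\<lambda>a b. a \<in> C \<and> b \<in> C \<and> ?E a b) ps"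
      and ps_sub: "set ps \<subseteq> insert u0 {b. \<exists>a. a \<in> C \<and> b \<in> C \<and> ?E a b}"
    by (rule rtranclp_imp_distinct_path)
  have psC: "set ps \<subseteq> C" using ps_sub u0(1) by auto
  have path: "is_path C ?E ps"
    unfolding is_path_def using ps psC successively_nth[OF succ] by blast
  \<comment> \<open>the spine starts left of every bar and ends right of every bar\<close>
  have spine: "x \<in> set ps \<or> (\<exists>u\<in>set ps. ?E u x)" if x: "x \<in> C" for x
  proof -
    have "l (hd ps) \<le> l x" "l x \<le> r (last ps)"
      using u0(2)[OF x] w0(2)[OF x] lr x CV ps(2,3) by force+
    moreover have "successively (\<lambda>a b. l a \<le> r b \<and> l b \<le> r a) ps"
      using succ by (rule successively_mono) (auto simp: overlap_graph_def)
    ultimately obtain p where "p \<in> set ps" "l p \<le> l x" "l x \<le> r p"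
      using successively_overlapping_covers[OF ps(1)] lr psC CV by blast
    then show ?thesis
      using lr x psC CV unfolding overlap_graph_def by (cases "p = x") force+
  qed
  show ?thesis unfolding is_caterpillar_def using tree path spine by blast
qed

theorem mainTheorem12:
  fixes k :: nat and V :: "'a set" and lft rgt hgt :: "'a \<Rightarrow> real"
  assumes "k \<ge> 1"
    and "bar_rep V lft rgt hgt"
    and "triangle_free V (bar_k_visible k V lft rgt hgt)"
  shows "disjoint_union_of_caterpillars V (bar_k_visible k V lft rgt hgt)"
proof -
  have ply: "no_triple_overlap V lft rgt"
    using triangle_free_bar_visibility_imp_no_triple_overlap assms by blast
  have "finite V" and "\<forall>i\<in>V. lft i \<le> rgt i" using assms(2) unfolding bar_rep_def by auto
  then show ?thesis
    unfolding disjoint_union_of_caterpillars_def bar_k_visible_eq_overlap_graph[OF assms(2) ply]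
    using overlap_graph_component_caterpillar ply by blast
qed

end
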